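(* Let $G$ be an exceptional graph with root $r$, and let $\{x,y\}=V_2(G)\setminus\{r\}$. Then one of the following holds: (i) $x$ and $y$ are non-adjacent, have the same neighborhood (they are $2$-twins), and $L_G(x,y)\equiv\{1,2\}\pmod 3$; (ii) $x$ and $y$ are adjacent and $L_G(x,y)\equiv\{0,1\}\pmod 3$. Moreover, if $G\neq K_{2,3}$, then $\{0,2\}\subseteq L_{G-y}(r,x)\pmod 3$ and $\{0,2\}\subseteq L_{G-x}(r,y)\pmod 3$.
   Context: All graphs are finite and simple. $V_2(H)$ is the set of degree-$2$ vertices of $H$. For distinct vertices $u,w$ of a graph $H$, $L_H(u,w)$ is the set of lengths (numbers of edges) of all $(u,w)$-paths in $H$. For sets of integers $A,B$, $A\subseteq B\pmod k$ means every $a\in A$ is congruent mod $k$ to some $b\in B$, and $A\equiv B\pmod k$ means both $A\subseteq B\pmod k$ and $B\subseteq A\pmod k$. Exceptional graphs: let $r$ be a degree-$2$ vertex of $G$. $G$ is an exceptional graph with root $r$ if there is a sequence $(G_0,x_0,y_0),\ldots,(G_n,x_n,y_n)$, $n\ge 0$, with $G_0=K_{2,3}$, $G_n=G$, such that for each $i$ the vertices $r,x_i,y_i$ are distinct degree-$2$ vertices of $G_i$, and for each $i<n$: (1) if $x_iy_i\notin E(G_i)$, $G_{i+1}$ is obtained from $G_i$ by adding a new path of length $3$ joining $x_i$ and $y_i$; (2) if $x_iy_i\in E(G_i)$, $G_{i+1}$ is obtained from $G_i$ either by adding a new vertex $v$ with $N_{G_{i+1}}(v)=N_{G_i}(w)$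 for some $w\in\{x_i,y_i\}$, or by adding a new $4$-cycle $abcda$ and the edges $ax_i,cy_i$. (Every such graph has exactly three degree-$2$ vertices.) *)

theory Defs
  imports Main
begin

text \<open>A finite simple graph is given by a vertex set V and a set E of edges,
each edge being a two-element subset of V.\<close>

definition nbrs :: "'a set set \<Rightarrow> 'a \<Rightarrow> 'a set" where
  "nbrs E v = {w. {v, w} \<in> E}"

definition deg :: "'a set set \<Rightarrow> 'a \<Rightarrow> nat" where
  "deg E v = card (nbrs E v)"

definition V2 :: "'a set \<Rightarrow> 'a set set \<Rightarrow> 'a set" where
  "V2 V E = {v \<in> V. deg E v = 2}"

definition is_path :: "'a set \<Rightarrow> 'a set set \<Rightarrow> 'a list \<Rightarrow> bool" where
  "is_path V E p \<longleftrightarrow> p \<noteq> [] \<and> distinct p \<and> set p \<subseteq> V \<and>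
     (\<forall>i. Suc i < length p \<longrightarrow> {p ! i, p ! Suc i} \<in> E)"

definition path_lengths :: "'a set \<Rightarrow> 'a set set \<Rightarrow> 'a \<Rightarrow> 'a \<Rightarrow> nat set" where
  "path_lengths V E u w =
     {length p - 1 | p. is_path V E p \<and> hd p = u \<and> last p = w}"

definition del_vertex_edges :: "'a \<Rightarrow> 'a set set \<Rightarrow> 'a set set" where
  "del_vertex_edges v E = {e \<in> E. v \<notin> e}"

definition subset_mod :: "nat \<Rightarrow> nat set \<Rightarrow> nat set \<Rightarrow> bool" where
  "subset_mod k A B \<longleftrightarrow> (\<forall>a\<in>A. \<exists>b\<in>B. a mod k = b mod k)"

definition equiv_mod :: "nat \<Rightarrow> nat set \<Rightarrow> nat set \<Rightarrow> bool" where
  "equiv_mod k A B \<longleftrightarrow> subset_mod k A B \<and> subset_mod k B A"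

definition K23_on :: "'a set \<Rightarrow> 'a set set \<Rightarrow> 'a \<Rightarrow> 'a \<Rightarrow> 'a \<Rightarrow> 'a \<Rightarrow> 'a \<Rightarrow> bool" where
  "K23_on V E a1 a2 b1 b2 b3 \<longleftrightarrow>
     distinct [a1, a2, b1, b2, b3] \<and> V = {a1, a2, b1, b2, b3} \<and>
     E = {{a, b} | a b. a \<in> {a1, a2} \<and> b \<in> {b1, b2, b3}}"

definition is_K23 :: "'a set \<Rightarrow> 'a set set \<Rightarrow> bool" where
  "is_K23 V E \<longleftrightarrow> (\<exists>a1 a2 b1 b2 b3. K23_on V E a1 a2 b1 b2 b3)"

text \<open>One step G_i -> G_{i+1} of the construction of exceptional graphs with root r,
  using the distinct degree-2 vertices r, x, y of G_i.\<close>
definition exc_step :: "'a \<Rightarrow> 'a \<Rightarrow> 'a \<Rightarrow> 'a set \<Rightarrow> 'a set set \<Rightarrow> 'a set \<Rightarrow> 'a set set \<Rightarrow> bool" where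
  "exc_step r x y V E V' E' \<longleftrightarrow>
     distinct [r, x, y] \<and> r \<in> V2 V E \<and> x \<in> V2 V E \<and> y \<in> V2 V E \<and>
     ( ({x, y} \<notin> E \<and>
         (\<exists>p q. p \<notin> V \<and> q \<notin> V \<and> p \<noteq> q \<and> V' = V \<union> {p, q} \<and>
                E' = E \<union> {{x, p}, {p, q}, {q, y}}))
     \<or> ({x, y} \<in> E \<and>
         ((\<exists>v w. v \<notin> V \<and> w \<in> {x, y} \<and> V' = insert v V \<and>
                 E' = E \<union> {{v, u} | u. u \<in> nbrs E w})
          \<or> (\<exists>a b c d. distinct [a, b, c, d] \<and> {a, b, c, d} \<inter> V = {} \<and>
                 V' = V \<union> {a, b, c, d} \<and>
                 E' = E \<union> {{a, b}, {b, c}, {c, d}, {d, a}, {a, x}, {c, y}}))))"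

inductive exc_reach :: "'a \<Rightarrow> 'a set \<Rightarrow> 'a set set \<Rightarrow> bool" for r where
  base: "K23_on V E a1 a2 b1 b2 b3 \<Longrightarrow> exc_reach r V E"
| step: "exc_reach r V E \<Longrightarrow> exc_step r x y V E V' E' \<Longrightarrow> exc_reach r V' E'"

text \<open>G is exceptional with root r: the last graph G_n of such a sequence, in which
  r, x_n, y_n are again distinct degree-2 vertices.\<close>
definition exceptional :: "'a set \<Rightarrow> 'a set set \<Rightarrow> 'a \<Rightarrow> bool" where
  "exceptional V E r \<longleftrightarrow> exc_reach r V E \<and>
     (\<exists>x y. distinct [r, x, y] \<and> r \<in> V2 V E \<and> x \<in> V2 V E \<and> y \<in> V2 V E)"

end

theory Submission
  imports Defs
begin

lemma distinct_hd_neq_last: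
  assumes "distinct xs" "length xs \<noteq> 1" "xs \<noteq> []"
  shows "hd xs \<noteq> last xs"
proof (cases xs)
  case (Cons h t)
  with assms have "t \<noteq> []" "h \<notin> set t" by auto
  then show ?thesis using Cons last_in_set[of t] by auto
qed (use assms in simp)

fun walk :: "'a set set \<Rightarrow> 'a list \<Rightarrow> bool" where
  "walk E (a # b # p) \<longleftrightarrow> {a, b} \<in> E \<and> walk E (b # p)"
| "walk E _ \<longleftrightarrow> True"

lemma walk_iff_nth: "walk E p \<longleftrightarrow> (\<forall>i. Suc i < length p \<longrightarrow> {p ! i, p ! Suc i} \<in> E)"
proof (induction E p rule: walk.induct)
  case (1 E a b p)
  then show ?case
    by (auto simp: less_Suc_eq_0_disj)
qed auto

lemma walk_Cons: "walk E (a # p) \<longleftrightarrow> walk E p \<and> (p \<noteq> [] \<longrightarrow> {a, hd p} \<in> E)"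
  by (cases p) auto

lemma walk_append:
  "walk E (p @ q) \<longleftrightarrow> walk E p \<and> walk E q \<and> (p \<noteq> [] \<longrightarrow> q \<noteq> [] \<longrightarrow> {last p, hd q} \<in> E)"
  by (induction p) (auto simp: walk_Cons)

lemma walk_rev: "walk E (rev p) \<longleftrightarrow> walk E p"
  by (induction p) (auto simp: walk_Cons walk_append hd_rev last_rev insert_commute)

lemma walk_mono: "walk E p \<Longrightarrow> E \<subseteq> E' \<Longrightarrow> walk E' p"
  by (induction p) (auto simp: walk_Cons)

lemma is_path_iff_walk: "is_path V E p \<longleftrightarrow> p \<noteq> [] \<and> distinct p \<and> set p \<subseteq> V \<and> walk E p"
  unfolding is_path_def walk_iff_nth ..

lemma is_path_rev: "is_path V E p \<Longrightarrow> is_path V E (rev p)"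
  by (simp add: is_path_iff_walk walk_rev)

lemma is_path_mono: "is_path V E p \<Longrightarrow> V \<subseteq> V' \<Longrightarrow> E \<subseteq> E' \<Longrightarrow> is_path V' E' p"
  by (auto simp: is_path_iff_walk walk_mono)

lemma is_path_del_vertex:
  "is_path V E p \<Longrightarrow> d \<notin> set p \<Longrightarrow> is_path (V - {d}) (del_vertex_edges d E) p"
proof -
  have "walk (del_vertex_edges d E) p" if "walk E p" "d \<notin> set p" for p
    using that by (induction p) (auto simp: walk_Cons del_vertex_edges_def)
  then show "is_path V E p \<Longrightarrow> d \<notin> set p \<Longrightarrow> ?thesis" by (auto simp: is_path_iff_walk)
qed

lemma is_path_Cons:
  assumes "p \<noteq> []"
  shows "is_path V E (a # p) \<longleftrightarrow> is_path V E p \<and> a \<in> V \<and> a \<notin> set p \<and> {a, hd p} \<in> E"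
  using assms by (auto simp: is_path_iff_walk walk_Cons)

lemma is_path_Cons_snoc:
  assumes "m \<noteq> []"
  shows "is_path V E (u # m @ [w]) \<longleftrightarrow> is_path V E m \<and> u \<in> V \<and> w \<in> V \<and> u \<noteq> w \<and>
    u \<notin> set m \<and> w \<notin> set m \<and> {u, hd m} \<in> E \<and> {last m, w} \<in> E"
  using assms by (auto simp: is_path_iff_walk walk_Cons walk_append)

lemma is_path_restrict:
  assumes "is_path (V \<union> N) (E \<union> F) p" "set p \<inter> N = {}" "\<forall>e\<in>F. e \<inter> N \<noteq> {}"
  shows "is_path V E p"
proof -
  have "walk E p" if "walk (E \<union> F) p" "set p \<inter> N = {}" for p
    using that
  proof (induction p)
    case (Cons a p)
    have "{a, hd p} \<notin> F" if "p \<noteq> []"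
    proof -
      have "{a, hd p} \<inter> N = {}" using Cons.prems(2) hd_in_set[OF that] by auto
      then show ?thesis using assms(3) by blast
    qed
    then show ?case using Cons by (auto simp: walk_Cons)
  qed simp
  moreover have "set p \<subseteq> V" using assms(1,2) unfolding is_path_iff_walk by blast
  ultimately show ?thesis using assms(1,2) unfolding is_path_iff_walk by blast
qed

lemma is_path_endpointsE:
  assumes "is_path V E p" "hd p = u" "last p = w" "u \<noteq> w"
  obtains m where "p = u # m @ [w]"
proof -
  from assms(1) have "p \<noteq> []" by (simp add: is_path_iff_walk)
  then obtain t where t: "p = u # t" using assms(2) by (cases p) auto
  with assms(3,4) have "t \<noteq> []" "last t = w" by auto
  then have "butlast t @ [w] = t" using append_butlast_last_id by metis
  with t show ?thesis using that by metis
qed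

lemma mem_path_lengths:
  "l \<in> path_lengths V E u w \<longleftrightarrow> (\<exists>p. is_path V E p \<and> hd p = u \<and> last p = w \<and> l = length p - 1)"
  unfolding path_lengths_def by blast

lemma length_in_path_lengths: "is_path V E p \<Longrightarrow> length p - 1 \<in> path_lengths V E (hd p) (last p)"
  unfolding mem_path_lengths by blast

lemma path_lengths_sym: "path_lengths V E u w = path_lengths V E w u"
proof -
  have "path_lengths V E u w \<subseteq> path_lengths V E w u" for u w
  proof
    fix l assume "l \<in> path_lengths V E u w"
    then obtain p where p: "is_path V E p" "hd p = u" "last p = w" "l = length p - 1"
      unfolding mem_path_lengths by blast
    then have "p \<noteq> []" by (simp add: is_path_iff_walk)
    with p show "l \<in> path_lengths V E w u" unfolding mem_path_lengths
      by (intro exI[of _ "rev p"]) (simp add: is_path_rev hd_rev last_rev)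
  qed
  then show ?thesis by blast
qed

lemma path_lengths_mono:
  "V \<subseteq> V' \<Longrightarrow> E \<subseteq> E' \<Longrightarrow> path_lengths V E u w \<subseteq> path_lengths V' E' u w"
  unfolding path_lengths_def using is_path_mono by blast

lemma path_lengths_del_vertex_subset:
  "path_lengths (V - {d}) (del_vertex_edges d E) u w \<subseteq> path_lengths V E u w"
  by (rule path_lengths_mono) (auto simp: del_vertex_edges_def)

lemma path_lengths_append:
  assumes "is_path V' E' (w # q)" "set q \<inter> V = {}" "V \<subseteq> V'" "E \<subseteq> E'"
  shows "(\<lambda>l. l + length q) ` path_lengths V E u w \<subseteq> path_lengths V' E' u (last (w # q))"
proof
  fix l assume "l \<in> (\<lambda>l. l + length q) ` path_lengths V E u w"
  then obtain l' where "l' \<in> path_lengths V E u w" "l = l' + length q" by blast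
  then obtain p where p: "is_path V E p" "hd p = u" "last p = w" "l = length p - 1 + length q"
    unfolding mem_path_lengths by blast
  have "is_path V' E' (p @ q)"
    using p(1,3) assms by (cases q) (auto simp: is_path_iff_walk walk_append walk_mono)
  moreover have "p \<noteq> []" using p(1) by (simp add: is_path_iff_walk)
  ultimately show "l \<in> path_lengths V' E' u (last (w # q))"
    unfolding mem_path_lengths using p by (intro exI[of _ "p @ q"]) (cases p, auto)
qed

lemma path_lengths_replace_last:
  assumes "u \<noteq> w" "v \<notin> V" "insert v V \<subseteq> V'" "E \<subseteq> E'" "\<forall>t\<in>nbrs E w. {t, v} \<in> E'"
  shows "path_lengths V E u w \<subseteq> path_lengths (V' - {w}) (del_vertex_edges w E') u v"
proof
  fix l assume "l \<in> path_lengths V E u w"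
  then obtain p where p: "is_path V E p" "hd p = u" "last p = w" "l = length p - 1"
    unfolding mem_path_lengths by blast
  obtain m where m: "p = u # m @ [w]" using is_path_endpointsE[OF p(1-3) assms(1)] .
  have "w \<in> V" using p(1,3) last_in_set by (fastforce simp: is_path_iff_walk)
  with assms(2) have "v \<noteq> w" by blast
  have to_v: "{t, v} \<in> del_vertex_edges w E'" if "{t, w} \<in> E" "t \<noteq> w" for t
  proof -
    have "t \<in> nbrs E w" using that(1) by (simp add: nbrs_def insert_commute)
    then show ?thesis using assms(5) that(2) \<open>v \<noteq> w\<close> by (simp add: del_vertex_edges_def)
  qed
  have "is_path (V' - {w}) (del_vertex_edges w E') (u # m @ [v])"
  proof (cases "m = []")
    case True
    then have "{u, w} \<in> E" "u \<in> V" using p(1) by (auto simp: m is_path_iff_walk)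
    moreover from this have "{u, v} \<in> del_vertex_edges w E'" using assms(1) by (intro to_v) auto
    ultimately show ?thesis using True assms(1-3) \<open>w \<in> V\<close> by (auto simp: is_path_iff_walk)
  next
    case False
    have m_path: "is_path V E m" "u \<in> V" "u \<notin> set m" "w \<notin> set m" "{u, hd m} \<in> E" "{last m, w} \<in> E"
      using p(1) False unfolding m is_path_Cons_snoc[OF False] by blast+
    have "V \<subseteq> V'" using assms(3) by blast
    with m_path(1) have "is_path V' E' m" using assms(4) by (rule is_path_mono)
    then have "is_path (V' - {w}) (del_vertex_edges w E') m" using m_path(4) by (rule is_path_del_vertex)
    moreover have "set m \<subseteq> V" using m_path(1) by (simp add: is_path_iff_walk)
    moreover have "{u, hd m} \<in> del_vertex_edges w E'"
      using m_path(4,5) False assms(1,4) by (auto simp: del_vertex_edges_def)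
    moreover have "{last m, v} \<in> del_vertex_edges w E'"
      using m_path(4,6) False by (intro to_v) auto
    ultimately show ?thesis using False m_path(2,3) assms(1-3) \<open>w \<in> V\<close>
      unfolding is_path_Cons_snoc[OF False] by auto
  qed
  then show "l \<in> path_lengths (V' - {w}) (del_vertex_edges w E') u v"
    unfolding mem_path_lengths using p(4) m by (intro exI[of _ "u # m @ [v]"]) simp
qed

definition simple_graph :: "'a set \<Rightarrow> 'a set set \<Rightarrow> bool" where
  "simple_graph V E \<longleftrightarrow> finite V \<and> (\<forall>e\<in>E. \<exists>a b. e = {a, b} \<and> a \<noteq> b \<and> a \<in> V \<and> b \<in> V)"

lemma simple_graph_edgeD:
  assumes "simple_graph V E" "{a, b} \<in> E"
  shows "a \<in> V \<and> b \<in> V \<and> a \<noteq> b"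
proof -
  obtain a' b' where "{a, b} = {a', b'}" "a' \<noteq> b'" "a' \<in> V" "b' \<in> V"
    using assms unfolding simple_graph_def by blast
  then show ?thesis by (auto simp: doubleton_eq_iff)
qed

lemma simple_graph_Un:
  assumes "simple_graph V E" "finite V'" "V \<subseteq> V'"
    and "\<forall>e\<in>F. \<exists>a b. e = {a, b} \<and> a \<noteq> b \<and> a \<in> V' \<and> b \<in> V'"
  shows "simple_graph V' (E \<union> F)"
proof -
  have "\<exists>a b. e = {a, b} \<and> a \<noteq> b \<and> a \<in> V' \<and> b \<in> V'" if "e \<in> E \<union> F" for e
  proof (cases "e \<in> E")
    case True
    then obtain a b where "e = {a, b}" "a \<noteq> b" "a \<in> V" "b \<in> V"
      using assms(1) unfolding simple_graph_def by blast
    then show ?thesis using assms(3) by blast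
  next
    case False
    then show ?thesis using that assms(4) by blast
  qed
  then show ?thesis using assms(2) unfolding simple_graph_def by blast
qed

lemma mem_nbrs: "w \<in> nbrs E u \<longleftrightarrow> {u, w} \<in> E"
  by (simp add: nbrs_def)

lemma nbrs_empty [simp]: "nbrs {} u = {}"
  by (simp add: nbrs_def)

lemma nbrs_insert_edge:
  "nbrs (insert {a, b} F) u =
    (if u = a then insert b (nbrs F u) else if u = b then insert a (nbrs F u) else nbrs F u)"
  by (auto simp: nbrs_def doubleton_eq_iff)

lemma nbrs_Un: "nbrs (E \<union> F) u = nbrs E u \<union> nbrs F u"
  by (auto simp: nbrs_def)

lemma nbrs_subset: "simple_graph V E \<Longrightarrow> nbrs E u \<subseteq> V"
  using simple_graph_edgeD[of V E u] by (auto simp: mem_nbrs)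

lemma finite_nbrs: "simple_graph V E \<Longrightarrow> finite (nbrs E u)"
  using nbrs_subset[of V E u] finite_subset unfolding simple_graph_def by blast

lemma nbrs_irrefl: "simple_graph V E \<Longrightarrow> u \<notin> nbrs E u"
  using simple_graph_edgeD[of V E u u] by (auto simp: mem_nbrs)

lemma nbrs_outside: "simple_graph V E \<Longrightarrow> u \<notin> V \<Longrightarrow> nbrs E u = {}"
  using simple_graph_edgeD[of V E u] by (auto simp: mem_nbrs)

lemma deg_Un:
  assumes "simple_graph V E" "finite (nbrs F u)" "u \<in> V \<Longrightarrow> nbrs F u \<inter> V = {}"
  shows "deg (E \<union> F) u = deg E u + card (nbrs F u)"
proof -
  have "nbrs (E \<union> F) u = nbrs E u \<union> nbrs F u" by (rule nbrs_Un)
  moreover have "nbrs E u \<inter> nbrs F u = {}"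
  proof (cases "u \<in> V")
    case True
    then show ?thesis using assms(3) nbrs_subset[OF assms(1)] by blast
  next
    case False
    then show ?thesis using nbrs_outside[OF assms(1)] by simp
  qed
  ultimately show ?thesis
    unfolding deg_def using finite_nbrs[OF assms(1)] assms(2) by (simp add: card_Un_disjoint)
qed

lemma V2_extension:
  assumes V2: "V2 V E = {r, x, y}" and min_deg: "\<forall>u\<in>V. 2 \<le> deg E u" and V': "V' = V \<union> N"
    and mono: "\<forall>u\<in>V. deg E u \<le> deg E' u" and min_deg_new: "\<forall>u\<in>N. 2 \<le> deg E' u"
    and deg_r: "deg E' r = 2" and T: "\<forall>u\<in>{x, y} \<union> N. deg E' u = 2 \<longleftrightarrow> u \<in> T" "T \<subseteq> {x, y} \<union> N"
  shows "V2 V' E' = insert r T" "\<forall>u\<in>V'. 2 \<le> deg E' u"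
proof -
  have in_V: "r \<in> V" "x \<in> V" "y \<in> V" using V2 unfolding V2_def by auto
  have "deg E' u \<noteq> 2" if "u \<in> V" "u \<notin> {r, x, y}" for u
  proof -
    have "deg E u \<noteq> 2" using that V2 unfolding V2_def by blast
    with that min_deg mono show ?thesis by fastforce
  qed
  then show "V2 V' E' = insert r T"
    using in_V deg_r T unfolding V2_def V' by blast
  show "\<forall>u\<in>V'. 2 \<le> deg E' u"
    using min_deg mono min_deg_new unfolding V' by (auto intro: order_trans)
qed

lemma del_vertex_edges_supset:
  assumes "simple_graph V E" "d \<notin> V" "E \<subseteq> E'"
  shows "E \<subseteq> del_vertex_edges d E'"
proof
  fix e assume "e \<in> E"
  then obtain a b where "e = {a, b}" "a \<in> V" "b \<in> V"
    using assms(1) unfolding simple_graph_def by blast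
  with \<open>e \<in> E\<close> assms(2,3) show "e \<in> del_vertex_edges d E'"
    unfolding del_vertex_edges_def by blast
qed

lemma path_lengths_append_avoiding:
  assumes "simple_graph V E" "is_path V' E' (w # q)" "set q \<inter> V = {}" "d \<notin> V" "d \<notin> set (w # q)"
    "V \<subseteq> V'" "E \<subseteq> E'"
  shows "(\<lambda>l. l + length q) ` path_lengths V E u w
    \<subseteq> path_lengths (V' - {d}) (del_vertex_edges d E') u (last (w # q))"
proof (rule path_lengths_append)
  show "is_path (V' - {d}) (del_vertex_edges d E') (w # q)"
    using assms(2,5) by (rule is_path_del_vertex)
  show "V \<subseteq> V' - {d}" using assms(4,6) by blast
  show "E \<subseteq> del_vertex_edges d E'" using assms(1,4,7) by (rule del_vertex_edges_supset)
qed (use assms(3) in blast)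

lemma path_lengths_degree_two_neighbour:
  assumes path: "is_path V E (x # m)" and "m \<noteq> []" "length m \<noteq> 1"
    and deg_x: "deg E x = 2" and y: "y \<in> nbrs E x" and t: "last m \<in> nbrs E x"
  shows "length m \<in> path_lengths V E x y"
proof (cases "last m = y")
  case True
  then show ?thesis using length_in_path_lengths[OF path] \<open>m \<noteq> []\<close> by simp
next
  case False
  have "is_path V E m" "{x, hd m} \<in> E" using path \<open>m \<noteq> []\<close> by (auto simp: is_path_Cons)
  from \<open>is_path V E m\<close> assms(2,3) have "hd m \<noteq> last m"
    by (intro distinct_hd_neq_last) (auto simp: is_path_iff_walk)
  moreover from \<open>{x, hd m} \<in> E\<close> have "hd m \<in> nbrs E x" by (simp add: mem_nbrs)
  ultimately have "hd m = y"
    using t y False deg_x card_2_iff[of "nbrs E x"] unfolding deg_def by auto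
  have "is_path V E (x # rev m)"
    using \<open>is_path V E m\<close> path t \<open>m \<noteq> []\<close> by (auto simp: is_path_Cons is_path_rev hd_rev mem_nbrs)
  then show ?thesis
    using length_in_path_lengths \<open>m \<noteq> []\<close> \<open>hd m = y\<close> by (fastforce simp: last_rev)
qed

definition residues :: "nat \<Rightarrow> nat set \<Rightarrow> nat set" where
  "residues k A = (\<lambda>a. a mod k) ` A"

lemma subset_mod_iff_residues: "subset_mod k A B \<longleftrightarrow> residues k A \<subseteq> residues k B"
  unfolding subset_mod_def residues_def by blast

lemma equiv_mod_iff_residues: "equiv_mod k A B \<longleftrightarrow> residues k A = residues k B"
  unfolding equiv_mod_def subset_mod_iff_residues by blast

lemma residues_mono: "A \<subseteq> B \<Longrightarrow> residues k A \<subseteq> residues k B"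
  unfolding residues_def by (rule image_mono)

lemma residues_empty [simp]: "residues k {} = {}"
  by (simp add: residues_def)

lemma residues_insert [simp]: "residues k (insert a A) = insert (a mod k) (residues k A)"
  by (simp add: residues_def)

lemma residues_shift_mono:
  assumes "S \<subseteq> residues k A" "(\<lambda>l. l + j) ` A \<subseteq> B"
  shows "(\<lambda>a. (a + j) mod k) ` S \<subseteq> residues k B"
proof -
  have "(\<lambda>a. (a + j) mod k) ` S \<subseteq> residues k ((\<lambda>l. l + j) ` A)"
    using assms(1) unfolding residues_def image_image by (auto simp: mod_add_left_eq)
  also have "\<dots> \<subseteq> residues k B" using assms(2) by (rule residues_mono)
  finally show ?thesis .
qed

lemma residues_insert_shift:
  "residues k (insert c ((\<lambda>l. l + j) ` A)) = insert (c mod k) ((\<lambda>a. (a + j) mod k) ` residues k A)"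
  unfolding residues_def image_image by (auto simp: mod_add_left_eq)

definition root_residues :: "'a \<Rightarrow> 'a set \<Rightarrow> 'a set set \<Rightarrow> 'a \<Rightarrow> 'a \<Rightarrow> bool" where
  "root_residues r V E x y \<longleftrightarrow>
     {0, 2} \<subseteq> residues 3 (path_lengths (V - {y}) (del_vertex_edges y E) r x) \<and>
     {0, 2} \<subseteq> residues 3 (path_lengths (V - {x}) (del_vertex_edges x E) r y)"

definition exc_twin_case :: "'a \<Rightarrow> 'a set \<Rightarrow> 'a set set \<Rightarrow> 'a \<Rightarrow> 'a \<Rightarrow> bool" where
  "exc_twin_case r V E x y \<longleftrightarrow>
     {x, y} \<notin> E \<and> nbrs E x = nbrs E y \<and> residues 3 (path_lengths V E x y) = {1, 2} \<and>
     {1, 2} \<subseteq> residues 3 (path_lengths V E r x) \<and> {1, 2} \<subseteq> residues 3 (path_lengths V E r y) \<and>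
     (\<not> is_K23 V E \<longrightarrow> root_residues r V E x y)"

definition exc_adjacent_case :: "'a \<Rightarrow> 'a set \<Rightarrow> 'a set set \<Rightarrow> 'a \<Rightarrow> 'a \<Rightarrow> bool" where
  "exc_adjacent_case r V E x y \<longleftrightarrow>
     {x, y} \<in> E \<and> residues 3 (path_lengths V E x y) = {0, 1} \<and> root_residues r V E x y"

definition exc_invariant :: "'a \<Rightarrow> 'a set \<Rightarrow> 'a set set \<Rightarrow> 'a \<Rightarrow> 'a \<Rightarrow> bool" where
  "exc_invariant r V E x y \<longleftrightarrow>
     simple_graph V E \<and> distinct [r, x, y] \<and> V2 V E = {r, x, y} \<and> (\<forall>u\<in>V. 2 \<le> deg E u) \<and>
     (exc_twin_case r V E x y \<or> exc_adjacent_case r V E x y)"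

lemma exc_invariant_swap:
  assumes "exc_invariant r V E x y"
  shows "exc_invariant r V E y x"
proof -
  have "{y, x} = {x, y}" "{r, y, x} = {r, x, y}" by auto
  moreover have "path_lengths V E y x = path_lengths V E x y" by (rule path_lengths_sym)
  moreover have "root_residues r V E y x = root_residues r V E x y"
    unfolding root_residues_def by blast
  ultimately have "exc_twin_case r V E y x = exc_twin_case r V E x y"
    "exc_adjacent_case r V E y x = exc_adjacent_case r V E x y"
    unfolding exc_twin_case_def exc_adjacent_case_def by auto
  with assms \<open>{r, y, x} = {r, x, y}\<close> show ?thesis unfolding exc_invariant_def by auto
qed

lemma exc_invariant_V2: "exc_invariant r V E x y \<Longrightarrow> V2 V E = {r, x, y} \<and> distinct [r, x, y]"
  unfolding exc_invariant_def by (elim conjE) (intro conjI)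

lemma exc_invariant_other_pair:
  assumes "exc_invariant r V E x0 y0" "V2 V E - {r} = {x, y}"
  shows "exc_invariant r V E x y"
proof -
  have "V2 V E - {r} = {x0, y0}" using exc_invariant_V2[OF assms(1)] by auto
  with assms(2) have "x = x0 \<and> y = y0 \<or> x = y0 \<and> y = x0" by (auto simp: doubleton_eq_iff)
  then show ?thesis using assms(1) exc_invariant_swap[of r V E x0 y0] by auto
qed

lemma exc_twin_caseI:
  assumes "{x, y} \<notin> E" "nbrs E x = nbrs E y" "residues 3 (path_lengths V E x y) = {1, 2}"
    and root_x: "{0, 1, 2} \<subseteq> residues 3 (path_lengths (V - {y}) (del_vertex_edges y E) r x)"
    and root_y: "{0, 1, 2} \<subseteq> residues 3 (path_lengths (V - {x}) (del_vertex_edges x E) r y)"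
  shows "exc_twin_case r V E x y"
proof -
  have "residues 3 (path_lengths (V - {w}) (del_vertex_edges w E) r u)
      \<subseteq> residues 3 (path_lengths V E r u)" for w u
    by (intro residues_mono path_lengths_del_vertex_subset)
  then have "{1, 2} \<subseteq> residues 3 (path_lengths V E r x)" "{1, 2} \<subseteq> residues 3 (path_lengths V E r y)"
    using root_x root_y by blast+
  with assms show ?thesis unfolding exc_twin_case_def root_residues_def by auto
qed

lemma root_residues_full:
  assumes graph: "simple_graph V E" and xy: "{x, y} \<in> E" and root: "root_residues r V E x y"
  shows "{0, 1, 2} \<subseteq> residues 3 (path_lengths V E r x)"
proof -
  have in_V: "x \<in> V" "y \<in> V" "x \<noteq> y" using simple_graph_edgeD[OF graph xy] by auto
  have "{0, 2} \<subseteq> residues 3 (path_lengths (V - {y}) (del_vertex_edges y E) r x)"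
    using root unfolding root_residues_def by blast
  also have "\<dots> \<subseteq> residues 3 (path_lengths V E r x)"
    by (intro residues_mono path_lengths_del_vertex_subset)
  finally have "{0, 2} \<subseteq> residues 3 (path_lengths V E r x)" .
  have "{0} \<subseteq> residues 3 (path_lengths (V - {x}) (del_vertex_edges x E) r y)"
    using root unfolding root_residues_def by blast
  moreover have "is_path V E [y, x]" using in_V xy by (simp add: is_path_iff_walk insert_commute)
  then have "(\<lambda>l. l + length [x]) ` path_lengths (V - {x}) (del_vertex_edges x E) r y
      \<subseteq> path_lengths V E r (last [y, x])"
    by (rule path_lengths_append) (auto simp: del_vertex_edges_def)
  then have "(\<lambda>l. l + 1) ` path_lengths (V - {x}) (del_vertex_edges x E) r y \<subseteq> path_lengths V E r x"
    by simp
  ultimately have "(\<lambda>a. (a + 1) mod 3) ` {0} \<subseteq> residues 3 (path_lengths V E r x)"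
    by (rule residues_shift_mono)
  with \<open>{0, 2} \<subseteq> residues 3 (path_lengths V E r x)\<close> show ?thesis by simp
qed

lemma K23_on_rotate: "K23_on V E a1 a2 b1 b2 b3 \<Longrightarrow> K23_on V E a1 a2 b2 b3 b1"
proof -
  have "{b2, b3, b1} = {b1, b2, b3}" "{a1, a2, b2, b3, b1} = {a1, a2, b1, b2, b3}" by auto
  then show "K23_on V E a1 a2 b1 b2 b3 \<Longrightarrow> K23_on V E a1 a2 b2 b3 b1"
    unfolding K23_on_def by auto
qed

lemma K23_on_explicit:
  assumes "K23_on V E a1 a2 b1 b2 b3"
  shows "distinct [a1, a2, b1, b2, b3]" "V = {a1, a2, b1, b2, b3}"
    "E = {{a1, b1}, {a1, b2}, {a1, b3}, {a2, b1}, {a2, b2}, {a2, b3}}"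
proof -
  show "distinct [a1, a2, b1, b2, b3]" "V = {a1, a2, b1, b2, b3}" using assms unfolding K23_on_def by blast+
  have pairs: "{{a, b} | a b. a \<in> A \<and> b \<in> B} = (\<Union>a\<in>A. (\<lambda>b. {a, b}) ` B)" for A B :: "'a set"
    by blast
  show "E = {{a1, b1}, {a1, b2}, {a1, b3}, {a2, b1}, {a2, b2}, {a2, b3}}"
    using assms unfolding K23_on_def pairs by (simp add: insert_commute)
qed


lemma K23_on_nbrs:
  assumes "K23_on V E a1 a2 b1 b2 b3"
  shows "b \<in> {b1, b2, b3} \<Longrightarrow> nbrs E b = {a1, a2}" "a \<in> {a1, a2} \<Longrightarrow> nbrs E a = {b1, b2, b3}"
  using K23_on_explicit[OF assms] by (auto simp: nbrs_insert_edge)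

lemma K23_on_path_lengths:
  assumes K23: "K23_on V E a1 a2 b1 b2 b3"
  shows "path_lengths V E b1 b2 = {2, 4}"
proof (intro equalityI subsetI)
  note d = K23_on_explicit(1)[OF K23] and V = K23_on_explicit(2)[OF K23]
  fix l assume "l \<in> path_lengths V E b1 b2"
  then obtain p where p: "is_path V E p" "hd p = b1" "last p = b2" "l = length p - 1"
    unfolding mem_path_lengths by blast
  have "length p = card (set p)" using p(1) by (simp add: is_path_iff_walk distinct_card)
  also have "\<dots> \<le> card V" using p(1) by (intro card_mono) (auto simp: V is_path_iff_walk)
  also have "card V = 5" using d V by simp
  finally have "length p \<le> 5" .
  moreover have "length p \<noteq> 0" "length p \<noteq> 1" using p(1-3) d by (auto simp: is_path_iff_walk length_Suc_conv)
  moreover have "length p \<noteq> 2" "length p \<noteq> 4"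
  proof -
    have nbr_b: "c \<in> {a1, a2}" if "{b, c} \<in> E" "b \<in> {b1, b2, b3}" for b c
      using K23_on_nbrs(1)[OF K23 that(2)] mem_nbrs[of c E b] that(1) by blast
    have no_aa: "{c1, c2} \<notin> E" if "c1 \<in> {a1, a2}" "c2 \<in> {a1, a2}" for c1 c2
      using K23_on_nbrs(2)[OF K23 that(1)] mem_nbrs[of c2 E c1] that(2) d by auto
    show "length p \<noteq> 2"
    proof
      assume "length p = 2"
      then have "p = [b1, b2]" using p(2,3) by (auto simp: length_Suc_conv numeral_eq_Suc)
      then have "{b1, b2} \<in> E" using p(1) by (simp add: is_path_iff_walk)
      then show False using nbr_b[of b1 b2] d by auto
    qed
    show "length p \<noteq> 4"
    proof
      assume "length p = 4"
      then obtain c1 c2 where "p = [b1, c1, c2, b2]" using p(2,3)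
        by (auto simp: length_Suc_conv numeral_eq_Suc)
      then have "{b1, c1} \<in> E" "{c1, c2} \<in> E" "{b2, c2} \<in> E"
        using p(1) by (auto simp: is_path_iff_walk insert_commute[of c2 b2])
      then show False using nbr_b[of b1 c1] nbr_b[of b2 c2] no_aa[of c1 c2] by auto
    qed
  qed
  ultimately have "length p = 3 \<or> length p = 5" by presburger
  then show "l \<in> {2, 4}" using p(4) by auto
next
  note d = K23_on_explicit(1)[OF K23] and V = K23_on_explicit(2)[OF K23]
    and E = K23_on_explicit(3)[OF K23]
  have "is_path V E [b1, a1, b2]" "is_path V E [b1, a1, b3, a2, b2]"
    using d unfolding V E by (auto simp: is_path_iff_walk)
  then have "length [b1, a1, b2] - 1 \<in> path_lengths V E b1 b2"
    "length [b1, a1, b3, a2, b2] - 1 \<in> path_lengths V E b1 b2"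
    using length_in_path_lengths by fastforce+
  then show "l \<in> path_lengths V E b1 b2" if "l \<in> {2, 4}" for l
    using that by (auto simp: numeral_eq_Suc)
qed

lemma exc_invariant_K23:
  assumes K23: "K23_on V E a1 a2 b1 b2 b3"
  shows "exc_invariant b1 V E b2 b3"
proof -
  note d = K23_on_explicit(1)[OF K23] and V = K23_on_explicit(2)[OF K23]
    and E = K23_on_explicit(3)[OF K23]
  have graph: "simple_graph V E" unfolding simple_graph_def V E using d by auto
  have deg_b: "deg E b = 2" if "b \<in> {b1, b2, b3}" for b
    using K23_on_nbrs(1)[OF K23 that] d by (simp add: deg_def)
  have deg_a: "deg E a = 3" if "a \<in> {a1, a2}" for a
    using K23_on_nbrs(2)[OF K23 that] d by (simp add: deg_def)
  have "V2 V E = {b1, b2, b3}" "\<forall>u\<in>V. 2 \<le> deg E u"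
    unfolding V2_def V using deg_a deg_b by auto
  moreover have "path_lengths V E b2 b3 = {2, 4}" "path_lengths V E b1 b2 = {2, 4}"
    "path_lengths V E b1 b3 = {2, 4}"
    using K23_on_path_lengths[OF K23_on_rotate[OF K23]] K23_on_path_lengths[OF K23]
      K23_on_path_lengths[OF K23_on_rotate[OF K23_on_rotate[OF K23]]] path_lengths_sym[of V E b1 b3]
    by auto
  moreover have "nbrs E b2 = {a1, a2}" "nbrs E b3 = {a1, a2}" using K23_on_nbrs(1)[OF K23] by auto
  then have "{b2, b3} \<notin> E" "nbrs E b2 = nbrs E b3" using mem_nbrs[of b3 E b2] d by auto
  moreover have "residues 3 {2, 4} = {1, 2}" by auto
  moreover have "is_K23 V E" unfolding is_K23_def using K23 by blast
  ultimately show ?thesis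
    unfolding exc_invariant_def exc_twin_case_def using graph d by simp
qed

lemma exc_invariant_K23_root:
  assumes K23: "K23_on V E a1 a2 b1 b2 b3" and r: "r \<in> V2 V E"
  shows "\<exists>x y. exc_invariant r V E x y"
proof -
  have "K23_on V E a1 a2 b2 b3 b1" "K23_on V E a1 a2 b3 b1 b2"
    using K23_on_rotate[OF K23] K23_on_rotate[OF K23_on_rotate[OF K23]] by auto
  note invs = exc_invariant_K23[OF K23] exc_invariant_K23[OF this(1)] exc_invariant_K23[OF this(2)]
  have "V2 V E = {b1, b2, b3}" using exc_invariant_V2[OF invs(1)] by blast
  with r consider "r = b1" | "r = b2" | "r = b3" by blast
  then show ?thesis using invs by cases auto
qed

locale path_extension =
  fixes V :: "'a set" and E :: "'a set set" and x y p q :: 'a and V' :: "'a set" and E' :: "'a set set"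
  assumes graph: "simple_graph V E" and ends: "x \<in> V" "y \<in> V" "x \<noteq> y"
    and new: "p \<notin> V" "q \<notin> V" "p \<noteq> q"
    and V': "V' = V \<union> {p, q}" and E': "E' = E \<union> {{x, p}, {p, q}, {q, y}}"
begin

lemma fresh: "p \<noteq> x" "p \<noteq> y" "q \<noteq> x" "q \<noteq> y"
  using ends new by auto

lemma subgraph: "V \<subseteq> V'" "E \<subseteq> E'"
  unfolding V' E' by auto

lemma simple_graph_extension: "simple_graph V' E'"
  unfolding V' E' by (rule simple_graph_Un[OF graph]) (use graph ends new in \<open>auto simp: simple_graph_def\<close>)

lemma deg_extension:
  "u \<in> V - {x, y} \<Longrightarrow> deg E' u = deg E u" "deg E' x = deg E x + 1" "deg E' y = deg E y + 1"
  "deg E' p = 2" "deg E' q = 2"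
proof -
  have nbrs_F: "nbrs {{x, p}, {p, q}, {q, y}} u = (if u = x then {p} else if u = y then {q}
      else if u = p then {x, q} else if u = q then {p, y} else {})" for u
    using ends fresh new by (auto simp: nbrs_insert_edge)
  have deg': "deg E' u = deg E u + card (nbrs {{x, p}, {p, q}, {q, y}} u)" for u
    unfolding E' by (rule deg_Un[OF graph]) (use nbrs_F new in auto)
  have "deg E p = 0" "deg E q = 0" using nbrs_outside[OF graph] new by (auto simp: deg_def)
  then show "deg E' p = 2" "deg E' q = 2" using deg' nbrs_F ends fresh new by auto
  show "deg E' x = deg E x + 1" "deg E' y = deg E y + 1" using deg' nbrs_F ends fresh by auto
  show "u \<in> V - {x, y} \<Longrightarrow> deg E' u = deg E u" using deg'[of u] nbrs_F[of u] new by auto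
qed

lemma V2_new_pair:
  assumes V2: "V2 V E = {r, x, y}" and min_deg: "\<forall>u\<in>V. 2 \<le> deg E u" and r: "r \<noteq> x" "r \<noteq> y"
  shows "V2 V' E' = {r, p, q}" "\<forall>u\<in>V'. 2 \<le> deg E' u"
proof -
  have "r \<in> V" and deg_xy: "deg E x = 2" "deg E y = 2" using V2 unfolding V2_def by auto
  have mono: "\<forall>u\<in>V. deg E u \<le> deg E' u"
  proof
    fix u assume "u \<in> V"
    then consider "u \<in> V - {x, y}" | "u = x" | "u = y" by blast
    then show "deg E u \<le> deg E' u" using deg_extension(1-3) by cases auto
  qed
  have "\<forall>u\<in>{p, q}. 2 \<le> deg E' u" using deg_extension(4,5) by auto
  moreover have "deg E' r = 2" using deg_extension(1)[of r] V2 \<open>r \<in> V\<close> r unfolding V2_def by auto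
  moreover have "\<forall>u\<in>{x, y} \<union> {p, q}. deg E' u = 2 \<longleftrightarrow> u \<in> {p, q}"
    using deg_extension(2-5) deg_xy fresh by auto
  moreover have "{p, q} \<subseteq> {x, y} \<union> {p, q}" by blast
  ultimately show "V2 V' E' = {r, p, q}" "\<forall>u\<in>V'. 2 \<le> deg E' u"
    by (rule V2_extension[OF V2 min_deg V' mono])+
qed

lemma path_lengths_new_pair_subset: "path_lengths V' E' p q \<subseteq> insert 1 ((\<lambda>l. l + 2) ` path_lengths V E x y)"
proof
  fix l assume "l \<in> path_lengths V' E' p q"
  then obtain s where s: "is_path V' E' s" "hd s = p" "last s = q" "l = length s - 1"
    unfolding mem_path_lengths by blast
  obtain m where m: "s = p # m @ [q]" using is_path_endpointsE[OF s(1-3) new(3)] .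
  show "l \<in> insert 1 ((\<lambda>l. l + 2) ` path_lengths V E x y)"
  proof (cases "m = []")
    case True
    then show ?thesis using s(4) m by simp
  next
    case False
    have m_path: "is_path V' E' m" "p \<notin> set m" "q \<notin> set m" "{p, hd m} \<in> E'" "{last m, q} \<in> E'"
      using s(1) unfolding m is_path_Cons_snoc[OF False] by blast+
    have "{p, hd m} \<notin> E" "{last m, q} \<notin> E"
      using simple_graph_edgeD[OF graph, of p "hd m"] simple_graph_edgeD[OF graph, of "last m" q]
        new by blast+
    moreover have "hd m \<noteq> q" "last m \<noteq> p" using m_path(2,3) False by auto
    ultimately have "hd m = x" "last m = y"
      using m_path(4,5) ends new fresh unfolding E' by (auto simp: doubleton_eq_iff)
    moreover have "is_path V E m"
      by (rule is_path_restrict[of V "{p, q}" E "{{x, p}, {p, q}, {q, y}}"])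
        (use m_path(1-3) in \<open>auto simp: V' E'\<close>)
    ultimately have "length m - 1 \<in> path_lengths V E x y"
      using length_in_path_lengths by fastforce
    moreover have "l = length m - 1 + 2" using s(4) m False by (cases m) auto
    ultimately show ?thesis by blast
  qed
qed

lemma path_lengths_new_pair: "path_lengths V' E' p q = insert 1 ((\<lambda>l. l + 2) ` path_lengths V E x y)"
proof (rule equalityI[OF path_lengths_new_pair_subset], rule subsetI)
  fix l assume "l \<in> insert 1 ((\<lambda>l. l + 2) ` path_lengths V E x y)"
  then consider "l = 1" | l' where "l' \<in> path_lengths V E x y" "l = l' + 2" by blast
  then show "l \<in> path_lengths V' E' p q"
  proof cases
    case 1
    have "is_path V' E' [p, q]" using new(3) by (simp add: is_path_iff_walk V' E')
    then show ?thesis using 1 length_in_path_lengths by fastforce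
  next
    case (2 l')
    then obtain P where P: "is_path V E P" "hd P = x" "last P = y" "l' = length P - 1"
      unfolding mem_path_lengths by blast
    then have "P \<noteq> []" by (simp add: is_path_iff_walk)
    have "is_path V' E' P" using P(1) subgraph by (rule is_path_mono)
    moreover have "p \<notin> set P" "q \<notin> set P" using P(1) new by (auto simp: is_path_iff_walk)
    moreover have "p \<in> V'" "q \<in> V'" "{p, x} \<in> E'" "{y, q} \<in> E'" by (auto simp: V' E')
    ultimately have "is_path V' E' (p # P @ [q])"
      using P(2,3) new(3) \<open>P \<noteq> []\<close> by (simp add: is_path_Cons_snoc)
    then show ?thesis
      using length_in_path_lengths[of V' E' "p # P @ [q]"] \<open>P \<noteq> []\<close> 2(2) P(4) by (cases P) auto
  qed
qed


lemma path_lengths_to_new_pair: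
  "(\<lambda>l. l + 1) ` path_lengths V E u x \<subseteq> path_lengths (V' - {q}) (del_vertex_edges q E') u p"
  "(\<lambda>l. l + 1) ` path_lengths V E u y \<subseteq> path_lengths (V' - {p}) (del_vertex_edges p E') u q"
proof -
  have "is_path V' E' [x, p]" "is_path V' E' [y, q]"
    using ends fresh by (simp_all add: is_path_iff_walk V' E' insert_commute)
  then show "(\<lambda>l. l + 1) ` path_lengths V E u x \<subseteq> path_lengths (V' - {q}) (del_vertex_edges q E') u p"
    "(\<lambda>l. l + 1) ` path_lengths V E u y \<subseteq> path_lengths (V' - {p}) (del_vertex_edges p E') u q"
    using path_lengths_append_avoiding[OF graph _ _ new(2) _ subgraph, of x "[p]" u]
      path_lengths_append_avoiding[OF graph _ _ new(1) _ subgraph, of y "[q]" u] new fresh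
    by simp_all
qed
end

lemma exc_invariant_add_path:
  assumes inv: "exc_invariant r V E x y" and nonadj: "{x, y} \<notin> E"
    and new: "p \<notin> V" "q \<notin> V" "p \<noteq> q"
    and V': "V' = V \<union> {p, q}" and E': "E' = E \<union> {{x, p}, {p, q}, {q, y}}"
  shows "exc_invariant r V' E' p q"
proof -
  have graph: "simple_graph V E" and dist: "distinct [r, x, y]" and V2: "V2 V E = {r, x, y}"
    and min_deg: "\<forall>u\<in>V. 2 \<le> deg E u"
    and res_xy: "residues 3 (path_lengths V E x y) = {1, 2}"
    and res_rx: "{1, 2} \<subseteq> residues 3 (path_lengths V E r x)"
    and res_ry: "{1, 2} \<subseteq> residues 3 (path_lengths V E r y)"
    using inv nonadj unfolding exc_invariant_def exc_twin_case_def exc_adjacent_case_def by auto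
  have in_V: "r \<in> V" "x \<in> V" "y \<in> V" using V2 unfolding V2_def by auto
  interpret path_extension V E x y p q V' E'
    using graph in_V dist new V' E' by unfold_locales auto
  have V2': "V2 V' E' = {r, p, q}" and min_deg': "\<forall>u\<in>V'. 2 \<le> deg E' u"
    using V2_new_pair[OF V2 min_deg] dist by auto
  have res_pq: "residues 3 (path_lengths V' E' p q) = {0, 1}"
    unfolding path_lengths_new_pair residues_insert_shift res_xy by auto
  have "root_residues r V' E' p q"
    using residues_shift_mono[OF res_rx path_lengths_to_new_pair(1)]
      residues_shift_mono[OF res_ry path_lengths_to_new_pair(2)]
    unfolding root_residues_def by (simp add: numeral_2_eq_2)
  moreover have "distinct [r, p, q]" "{p, q} \<in> E'" using in_V new unfolding E' by auto
  ultimately show ?thesis unfolding exc_invariant_def exc_adjacent_case_def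
    using simple_graph_extension V2' min_deg' res_pq by auto
qed

locale twin_extension =
  fixes V :: "'a set" and E :: "'a set set" and x y v :: 'a and V' :: "'a set" and E' :: "'a set set"
  assumes graph: "simple_graph V E" and edge: "{x, y} \<in> E" and deg_x: "deg E x = 2"
    and new: "v \<notin> V" and V': "V' = insert v V" and E': "E' = E \<union> {{v, t} | t. t \<in> nbrs E x}"
begin

lemma ends: "x \<in> V" "y \<in> V" "x \<noteq> y"
  using simple_graph_edgeD[OF graph edge] by auto

lemma subgraph: "V \<subseteq> V'" "E \<subseteq> E'"
  unfolding V' E' by auto

lemma new_not_nbr: "v \<notin> nbrs E u"
  using nbrs_subset[OF graph] new by blast

lemma edge_to_new: "{u, v} \<in> E' \<longleftrightarrow> u \<in> nbrs E x"
proof -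
  have "{u, v} \<notin> E" using simple_graph_edgeD[OF graph, of u v] new by blast
  then show ?thesis using new_not_nbr unfolding E' by (auto simp: doubleton_eq_iff)
qed

lemma simple_graph_extension: "simple_graph V' E'"
  unfolding V' E'
proof (rule simple_graph_Un[OF graph])
  show "\<forall>e\<in>{{v, t} | t. t \<in> nbrs E x}. \<exists>a b. e = {a, b} \<and> a \<noteq> b \<and> a \<in> insert v V \<and> b \<in> insert v V"
    using nbrs_subset[OF graph] new_not_nbr by blast
qed (use graph in \<open>auto simp: simple_graph_def\<close>)

lemma nbrs_extension: "nbrs E' u = nbrs E u \<union> (if u = v then nbrs E x else if u \<in> nbrs E x then {v} else {})"
proof -
  have "nbrs {{v, t} | t. t \<in> nbrs E x} u = (if u = v then nbrs E x else if u \<in> nbrs E x then {v} else {})"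
    using new_not_nbr unfolding nbrs_def by (auto simp: doubleton_eq_iff)
  then show ?thesis unfolding E' nbrs_Un by simp
qed

lemma twins: "nbrs E' x = nbrs E x" "nbrs E' v = nbrs E x"
  using nbrs_extension nbrs_irrefl[OF graph, of x] nbrs_outside[OF graph new] ends new by auto

lemma deg_extension:
  "u \<in> V - nbrs E x \<Longrightarrow> deg E' u = deg E u" "u \<in> nbrs E x \<Longrightarrow> deg E' u = deg E u + 1"
  "deg E' v = 2"
proof -
  show "deg E' v = 2" using twins deg_x by (simp add: deg_def)
  have "finite (nbrs E u)" by (rule finite_nbrs[OF graph])
  then show "u \<in> V - nbrs E x \<Longrightarrow> deg E' u = deg E u" "u \<in> nbrs E x \<Longrightarrow> deg E' u = deg E u + 1"
    using nbrs_extension[of u] new new_not_nbr[of u] new_not_nbr[of x] by (auto simp: deg_def)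
qed

lemma V2_new_pair:
  assumes V2: "V2 V E = {r, x, y}" and min_deg: "\<forall>u\<in>V. 2 \<le> deg E u" and r: "deg E' r = 2"
  shows "V2 V' E' = {r, x, v}" "\<forall>u\<in>V'. 2 \<le> deg E' u"
proof -
  have mono: "\<forall>u\<in>V. deg E u \<le> deg E' u"
  proof
    fix u assume "u \<in> V"
    then consider "u \<in> V - nbrs E x" | "u \<in> nbrs E x" by blast
    then show "deg E u \<le> deg E' u" using deg_extension(1,2) by cases auto
  qed
  have "V' = V \<union> {v}" using V' by simp
  have "x \<notin> nbrs E x" "y \<in> nbrs E x" using nbrs_irrefl[OF graph] edge by (auto simp: mem_nbrs)
  moreover have "deg E x = 2" "deg E y = 2" using V2 unfolding V2_def by auto
  ultimately have T: "\<forall>u\<in>{x, y} \<union> {v}. deg E' u = 2 \<longleftrightarrow> u \<in> {x, v}"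
    using deg_extension ends new by auto
  have "\<forall>u\<in>{v}. 2 \<le> deg E' u" using deg_extension(3) by simp
  moreover note r T
  moreover have "{x, v} \<subseteq> {x, y} \<union> {v}" by blast
  ultimately show "V2 V' E' = {r, x, v}" "\<forall>u\<in>V'. 2 \<le> deg E' u"
    by (rule V2_extension[OF V2 min_deg \<open>V' = V \<union> {v}\<close> mono])+
qed

lemma path_lengths_new_pair_subset: "path_lengths V' E' x v \<subseteq> insert 2 ((\<lambda>l. l + 1) ` path_lengths V E x y)"
proof
  fix l assume "l \<in> path_lengths V' E' x v"
  then obtain s where s: "is_path V' E' s" "hd s = x" "last s = v" "l = length s - 1"
    unfolding mem_path_lengths by blast
  have "x \<noteq> v" using ends new by blast
  then obtain m where m: "s = x # m @ [v]" using is_path_endpointsE[OF s(1-3)] by blast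
  have "m \<noteq> []" using s(1) edge_to_new[of x] nbrs_irrefl[OF graph] by (auto simp: m is_path_iff_walk)
  then have m_path: "is_path V' E' m" "x \<in> V'" "x \<notin> set m" "v \<notin> set m" "{x, hd m} \<in> E'"
      "{last m, v} \<in> E'"
    using s(1) unfolding m is_path_Cons_snoc[OF \<open>m \<noteq> []\<close>] by blast+
  have "is_path V' E' (x # m)"
    using m_path(1-3,5) by (simp add: is_path_Cons[OF \<open>m \<noteq> []\<close>])
  then have "is_path (V \<union> {v}) (E \<union> {{v, t} | t. t \<in> nbrs E x}) (x # m)"
    by (simp add: V' E')
  then have "is_path V E (x # m)"
    by (rule is_path_restrict) (use m_path(4) \<open>x \<noteq> v\<close> in auto)
  moreover have "last m \<in> nbrs E x" "y \<in> nbrs E x"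
    using m_path(6) edge_to_new edge by (auto simp: mem_nbrs)
  ultimately have "length m = 1 \<or> length m \<in> path_lengths V E x y"
    using path_lengths_degree_two_neighbour[OF _ \<open>m \<noteq> []\<close> _ deg_x] by blast
  then show "l \<in> insert 2 ((\<lambda>l. l + 1) ` path_lengths V E x y)" using s(4) m by auto
qed

lemma path_lengths_new_pair: "path_lengths V' E' x v = insert 2 ((\<lambda>l. l + 1) ` path_lengths V E x y)"
proof (rule equalityI[OF path_lengths_new_pair_subset], rule subsetI)
  fix l assume "l \<in> insert 2 ((\<lambda>l. l + 1) ` path_lengths V E x y)"
  moreover have "is_path V' E' [y, v]"
    using ends new edge_to_new[of y] edge by (auto simp: is_path_iff_walk V' mem_nbrs)
  then have "(\<lambda>l. l + length [v]) ` path_lengths V E x y \<subseteq> path_lengths V' E' x (last [y, v])"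
    using new subgraph by (intro path_lengths_append) auto
  moreover have "is_path V' E' [x, y, v]"
    using ends new edge subgraph edge_to_new[of y] by (auto simp: is_path_iff_walk V' mem_nbrs)
  then have "2 \<in> path_lengths V' E' x v"
    using length_in_path_lengths[of V' E' "[x, y, v]"] by (simp add: numeral_2_eq_2)
  ultimately show "l \<in> path_lengths V' E' x v" by auto
qed


lemma path_lengths_to_new_pair:
  "path_lengths V E u x \<subseteq> path_lengths (V' - {v}) (del_vertex_edges v E') u x"
  "u \<noteq> x \<Longrightarrow> path_lengths V E u x \<subseteq> path_lengths (V' - {x}) (del_vertex_edges x E') u v"
proof -
  show "path_lengths V E u x \<subseteq> path_lengths (V' - {v}) (del_vertex_edges v E') u x"
    using del_vertex_edges_supset[OF graph new subgraph(2)] new subgraph(1)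
    by (intro path_lengths_mono) auto
  show "u \<noteq> x \<Longrightarrow> path_lengths V E u x \<subseteq> path_lengths (V' - {x}) (del_vertex_edges x E') u v"
    using new subgraph edge_to_new by (intro path_lengths_replace_last) (auto simp: V' insert_commute)
qed
end

lemma exc_invariant_add_twin:
  assumes inv: "exc_invariant r V E x y" and adj: "{x, y} \<in> E" and new: "v \<notin> V"
    and V': "V' = insert v V" and E': "E' = E \<union> {{v, t} | t. t \<in> nbrs E x}"
    and root_deg: "r \<in> V2 V' E'"
  shows "exc_invariant r V' E' x v"
proof -
  have graph: "simple_graph V E" and dist: "distinct [r, x, y]" and V2: "V2 V E = {r, x, y}"
    and min_deg: "\<forall>u\<in>V. 2 \<le> deg E u"
    and res_xy: "residues 3 (path_lengths V E x y) = {0, 1}"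
    and root: "root_residues r V E x y"
    using inv adj unfolding exc_invariant_def exc_twin_case_def exc_adjacent_case_def by auto
  have in_V: "r \<in> V" "x \<in> V" "y \<in> V" and "deg E x = 2" using V2 unfolding V2_def by auto
  interpret twin_extension V E x y v V' E'
    using graph adj \<open>deg E x = 2\<close> new V' E' by unfold_locales auto
  have V2': "V2 V' E' = {r, x, v}" and min_deg': "\<forall>u\<in>V'. 2 \<le> deg E' u"
    using V2_new_pair[OF V2 min_deg] root_deg unfolding V2_def by auto
  have res_xv: "residues 3 (path_lengths V' E' x v) = {1, 2}"
    unfolding path_lengths_new_pair residues_insert_shift res_xy by auto
  have full: "{0, 1, 2} \<subseteq> residues 3 (path_lengths V E r x)"
    using root_residues_full[OF graph adj root] .
  from dist have "r \<noteq> x" by simp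
  have "{0, 1, 2} \<subseteq> residues 3 (path_lengths (V' - {v}) (del_vertex_edges v E') r x)"
    using full residues_mono[OF path_lengths_to_new_pair(1)] by (rule order_trans)
  moreover have "{0, 1, 2} \<subseteq> residues 3 (path_lengths (V' - {x}) (del_vertex_edges x E') r v)"
    using full residues_mono[OF path_lengths_to_new_pair(2)[OF \<open>r \<noteq> x\<close>]] by (rule order_trans)
  moreover have "{x, v} \<notin> E'" using twins new_not_nbr by (simp add: mem_nbrs[symmetric])
  ultimately have "exc_twin_case r V' E' x v" using twins res_xv by (intro exc_twin_caseI) auto
  moreover have "distinct [r, x, v]" using dist in_V new by auto
  ultimately show ?thesis unfolding exc_invariant_def using simple_graph_extension V2' min_deg' by auto
qed

locale cycle_extension =
  fixes V :: "'a set" and E :: "'a set set" and x y a b c d :: 'a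
    and V' :: "'a set" and E' :: "'a set set"
  assumes graph: "simple_graph V E" and ends: "x \<in> V" "y \<in> V" "x \<noteq> y"
    and new: "distinct [a, b, c, d]" "{a, b, c, d} \<inter> V = {}"
    and V': "V' = V \<union> {a, b, c, d}" and E': "E' = E \<union> {{a, b}, {b, c}, {c, d}, {d, a}, {a, x}, {c, y}}"
begin

lemma fresh: "a \<noteq> b" "a \<noteq> c" "a \<noteq> d" "b \<noteq> c" "b \<noteq> d" "c \<noteq> d"
  "x \<noteq> a" "x \<noteq> b" "x \<noteq> c" "x \<noteq> d" "y \<noteq> a" "y \<noteq> b" "y \<noteq> c" "y \<noteq> d"
  using ends new by auto

lemma subgraph: "V \<subseteq> V'" "E \<subseteq> E'"
  unfolding V' E' by auto

lemma simple_graph_extension: "simple_graph V' E'"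
  unfolding V' E' by (rule simple_graph_Un[OF graph]) (use graph ends fresh in \<open>auto simp: simple_graph_def\<close>)

lemma gadget_edges:
  "{b, u} \<in> E' \<longleftrightarrow> u = a \<or> u = c" "{u, d} \<in> E' \<longleftrightarrow> u = a \<or> u = c"
  "u \<notin> {a, b, c, d} \<Longrightarrow> {a, u} \<in> E' \<longleftrightarrow> u = x" "u \<notin> {a, b, c, d} \<Longrightarrow> {c, u} \<in> E' \<longleftrightarrow> u = y"
  "{a, c} \<notin> E'" "{b, d} \<notin> E'"
proof -
  have E'_new: "{w, u} \<in> E' \<longleftrightarrow> {w, u} \<in> {{a, b}, {b, c}, {c, d}, {d, a}, {a, x}, {c, y}}"
    if "w \<in> {a, b, c, d}" for w u
  proof -
    have "{w, u} \<notin> E" using simple_graph_edgeD[OF graph, of w u] that new(2) by blast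
    then show ?thesis unfolding E' Un_iff by (simp only: simp_thms)
  qed
  show "{b, u} \<in> E' \<longleftrightarrow> u = a \<or> u = c" using E'_new[of b] fresh by (auto simp: doubleton_eq_iff)
  show "{u, d} \<in> E' \<longleftrightarrow> u = a \<or> u = c"
    using E'_new[of d] fresh by (auto simp: doubleton_eq_iff insert_commute[of u d])
  show "u \<notin> {a, b, c, d} \<Longrightarrow> {a, u} \<in> E' \<longleftrightarrow> u = x" using E'_new[of a] fresh by (auto simp: doubleton_eq_iff)
  show "u \<notin> {a, b, c, d} \<Longrightarrow> {c, u} \<in> E' \<longleftrightarrow> u = y" using E'_new[of c] fresh by (auto simp: doubleton_eq_iff)
  show "{a, c} \<notin> E'" using E'_new[of a c] fresh by (auto simp: doubleton_eq_iff)
  show "{b, d} \<notin> E'" using E'_new[of b d] fresh by (auto simp: doubleton_eq_iff)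
qed

lemma deg_extension:
  "u \<in> V - {x, y} \<Longrightarrow> deg E' u = deg E u" "deg E' x = deg E x + 1" "deg E' y = deg E y + 1"
  "deg E' a = 3" "deg E' b = 2" "deg E' c = 3" "deg E' d = 2"
  "nbrs E' b = {a, c}" "nbrs E' d = {a, c}"
proof -
  let ?F = "{{a, b}, {b, c}, {c, d}, {d, a}, {a, x}, {c, y}}"
  have nbrs_F: "nbrs ?F u = (if u = a then {b, d, x} else if u = b then {a, c}
      else if u = c then {b, d, y} else if u = d then {a, c} else if u = x then {a}
      else if u = y then {c} else {})" for u
    using fresh ends by (auto simp: nbrs_insert_edge)
  have deg': "deg E' u = deg E u + card (nbrs ?F u)" for u
    unfolding E' by (rule deg_Un[OF graph]) (use nbrs_F new(2) in auto)
  have nbrs_new: "nbrs E' u = nbrs ?F u" if "u \<in> {a, b, c, d}" for u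
    using nbrs_outside[OF graph, of u] that new(2) unfolding E' nbrs_Un by auto
  have "deg E u = 0" if "u \<in> {a, b, c, d}" for u
    using nbrs_outside[OF graph, of u] that new(2) by (auto simp: deg_def)
  then show "deg E' a = 3" "deg E' b = 2" "deg E' c = 3" "deg E' d = 2"
    using deg' nbrs_F fresh by auto
  show "nbrs E' b = {a, c}" "nbrs E' d = {a, c}" using nbrs_new nbrs_F fresh by auto
  show "deg E' x = deg E x + 1" "deg E' y = deg E y + 1" using deg' nbrs_F fresh ends by auto
  show "u \<in> V - {x, y} \<Longrightarrow> deg E' u = deg E u" using deg'[of u] nbrs_F[of u] new(2) by auto
qed

lemma V2_new_pair:
  assumes V2: "V2 V E = {r, x, y}" and min_deg: "\<forall>u\<in>V. 2 \<le> deg E u" and r: "r \<noteq> x" "r \<noteq> y"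
  shows "V2 V' E' = {r, b, d}" "\<forall>u\<in>V'. 2 \<le> deg E' u"
proof -
  have "r \<in> V" and deg_xy: "deg E x = 2" "deg E y = 2" using V2 unfolding V2_def by auto
  have mono: "\<forall>u\<in>V. deg E u \<le> deg E' u"
  proof
    fix u assume "u \<in> V"
    then consider "u \<in> V - {x, y}" | "u = x" | "u = y" by blast
    then show "deg E u \<le> deg E' u" using deg_extension(1-3) by cases auto
  qed
  have "\<forall>u\<in>{a, b, c, d}. 2 \<le> deg E' u" using deg_extension(4-7) by auto
  moreover have "deg E' r = 2" using deg_extension(1)[of r] V2 \<open>r \<in> V\<close> r unfolding V2_def by auto
  moreover have "\<forall>u\<in>{x, y} \<union> {a, b, c, d}. deg E' u = 2 \<longleftrightarrow> u \<in> {b, d}"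
    using deg_extension(2-7) deg_xy fresh by auto
  moreover have "{b, d} \<subseteq> {x, y} \<union> {a, b, c, d}" by blast
  ultimately show "V2 V' E' = {r, b, d}" "\<forall>u\<in>V'. 2 \<le> deg E' u"
    by (rule V2_extension[OF V2 min_deg V' mono])+
qed

lemma path_lengths_across_gadget:
  assumes path: "is_path V' E' (u1 # m @ [u2])" and u12: "{u1, u2} = {a, c}"
    and bd: "b \<notin> set m" "d \<notin> set m"
  shows "length (u1 # m @ [u2]) - 1 \<in> (\<lambda>l. l + 2) ` path_lengths V E x y"
proof -
  have "u1 \<in> {a, c}" "u2 \<in> {a, c}" "u1 \<noteq> u2" using u12 fresh by (auto simp: doubleton_eq_iff)
  have "m \<noteq> []" using path gadget_edges(5) u12 by (auto simp: is_path_iff_walk insert_commute)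
  then have m_path: "is_path V' E' m" "u1 \<notin> set m" "u2 \<notin> set m" "{u1, hd m} \<in> E'" "{last m, u2} \<in> E'"
    using path unfolding is_path_Cons_snoc[OF \<open>m \<noteq> []\<close>] by blast+
  have avoid: "set m \<inter> {a, b, c, d} = {}" using m_path(2,3) bd u12 by auto
  then have "hd m \<notin> {a, b, c, d}" "last m \<notin> {a, b, c, d}"
    using hd_in_set[OF \<open>m \<noteq> []\<close>] last_in_set[OF \<open>m \<noteq> []\<close>] by blast+
  moreover have "{u2, last m} \<in> E'" using m_path(5) by (simp add: insert_commute)
  ultimately have "hd m = (if u1 = a then x else y)" "last m = (if u2 = a then x else y)"
    using m_path(4) gadget_edges(3,4) \<open>u1 \<in> {a, c}\<close> \<open>u2 \<in> {a, c}\<close> by auto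
  then have "hd m = x \<and> last m = y \<or> hd m = y \<and> last m = x"
    using \<open>u1 \<noteq> u2\<close> \<open>u1 \<in> {a, c}\<close> \<open>u2 \<in> {a, c}\<close> by auto
  moreover have "is_path V E m"
    using m_path(1) avoid
    by (intro is_path_restrict[of V "{a, b, c, d}" E "{{a, b}, {b, c}, {c, d}, {d, a}, {a, x}, {c, y}}"])
      (auto simp: V' E')
  then have "length m - 1 \<in> path_lengths V E (hd m) (last m)" by (rule length_in_path_lengths)
  ultimately have "length m - 1 \<in> path_lengths V E x y" using path_lengths_sym[of V E y x] by auto
  moreover have "length (u1 # m @ [u2]) - 1 = length m - 1 + 2" using \<open>m \<noteq> []\<close> by (cases m) auto
  ultimately show ?thesis by simp
qed

lemma path_lengths_new_pair_subset: "path_lengths V' E' b d \<subseteq> insert 2 ((\<lambda>l. l + 4) ` path_lengths V E x y)"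
proof
  fix l assume "l \<in> path_lengths V' E' b d"
  then obtain s where s: "is_path V' E' s" "hd s = b" "last s = d" "l = length s - 1"
    unfolding mem_path_lengths by blast
  obtain m where m: "s = b # m @ [d]" using is_path_endpointsE[OF s(1-3)] fresh by auto
  have "m \<noteq> []" using s(1) gadget_edges(6) by (auto simp: m is_path_iff_walk)
  then have m_path: "is_path V' E' m" "b \<notin> set m" "d \<notin> set m" "{b, hd m} \<in> E'" "{last m, d} \<in> E'"
    using s(1) unfolding m is_path_Cons_snoc[OF \<open>m \<noteq> []\<close>] by blast+
  have ends_m: "hd m \<in> {a, c}" "last m \<in> {a, c}" using m_path(4,5) gadget_edges(1,2) by auto
  show "l \<in> insert 2 ((\<lambda>l. l + 4) ` path_lengths V E x y)"
  proof (cases "length m = 1")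
    case True
    then show ?thesis using s(4) m by simp
  next
    case False
    with \<open>m \<noteq> []\<close> m_path(1) have "hd m \<noteq> last m"
      by (intro distinct_hd_neq_last) (auto simp: is_path_iff_walk)
    then obtain m2 where m2: "m = hd m # m2 @ [last m]"
      using is_path_endpointsE[OF m_path(1)] by blast
    have "{hd m, last m} = {a, c}" using ends_m \<open>hd m \<noteq> last m\<close> by auto
    moreover have "is_path V' E' (hd m # m2 @ [last m])" using m_path(1) m2 by simp
    moreover have "set m2 \<subseteq> set m" by (subst m2) auto
    ultimately have "length m - 1 \<in> (\<lambda>l. l + 2) ` path_lengths V E x y"
      using path_lengths_across_gadget m_path(2,3) m2 by (metis subsetD)
    then obtain l' where "l' \<in> path_lengths V E x y" "length m - 1 = l' + 2" by blast
    moreover have "l = length m - 1 + 2" using s(4) m \<open>m \<noteq> []\<close> by (cases m) auto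
    ultimately show ?thesis by auto
  qed
qed

lemma path_lengths_new_pair: "path_lengths V' E' b d = insert 2 ((\<lambda>l. l + 4) ` path_lengths V E x y)"
proof (rule equalityI[OF path_lengths_new_pair_subset], rule subsetI)
  fix l assume "l \<in> insert 2 ((\<lambda>l. l + 4) ` path_lengths V E x y)"
  then consider "l = 2" | l' where "l' \<in> path_lengths V E x y" "l = l' + 4" by blast
  then show "l \<in> path_lengths V' E' b d"
  proof cases
    case 1
    have "is_path V' E' [b, a, d]"
      using fresh gadget_edges(1)[of a] gadget_edges(2)[of a] by (auto simp: is_path_iff_walk V')
    then show ?thesis
      using 1 length_in_path_lengths[of V' E' "[b, a, d]"] by (simp add: numeral_2_eq_2)
  next
    case (2 l')
    then obtain P where P: "is_path V E P" "hd P = x" "last P = y" "l' = length P - 1"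
      unfolding mem_path_lengths by blast
    then have "P \<noteq> []" by (simp add: is_path_iff_walk)
    have "is_path V' E' P" using P(1) subgraph by (rule is_path_mono)
    moreover have "set P \<inter> {a, b, c, d} = {}" using P(1) new(2) by (auto simp: is_path_iff_walk)
    moreover have "{a, x} \<in> E'" "{y, c} \<in> E'" unfolding E' by auto
    ultimately have "is_path V' E' (a # P @ [c])"
      using P(2,3) fresh \<open>P \<noteq> []\<close> by (auto simp: is_path_Cons_snoc V')
    then have "is_path V' E' (b # (a # P @ [c]) @ [d])"
      by (subst is_path_Cons_snoc)
        (use \<open>set P \<inter> {a, b, c, d} = {}\<close> fresh gadget_edges(1,2) in \<open>auto simp: V'\<close>)
    then have "length (b # (a # P @ [c]) @ [d]) - 1 \<in> path_lengths V' E' b d"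
      using length_in_path_lengths by fastforce
    moreover have "length (b # (a # P @ [c]) @ [d]) - 1 = l" using 2(2) P(4) \<open>P \<noteq> []\<close> by simp
    ultimately show ?thesis by simp
  qed
qed


lemma path_lengths_to_new_pair:
  "(\<lambda>l. l + 2) ` path_lengths V E u x \<subseteq> path_lengths (V' - {d}) (del_vertex_edges d E') u b"
  "(\<lambda>l. l + 2) ` path_lengths V E u x \<subseteq> path_lengths (V' - {b}) (del_vertex_edges b E') u d"
proof -
  have "is_path V' E' [x, a, b]" "is_path V' E' [x, a, d]"
    using ends fresh by (simp_all add: is_path_iff_walk V' E' insert_commute)
  then show "(\<lambda>l. l + 2) ` path_lengths V E u x \<subseteq> path_lengths (V' - {d}) (del_vertex_edges d E') u b"
    "(\<lambda>l. l + 2) ` path_lengths V E u x \<subseteq> path_lengths (V' - {b}) (del_vertex_edges b E') u d"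
    using path_lengths_append_avoiding[OF graph _ _ _ _ subgraph, of x "[a, b]" d u]
      path_lengths_append_avoiding[OF graph _ _ _ _ subgraph, of x "[a, d]" b u] new fresh
    by (simp_all add: numeral_2_eq_2)
qed
end

lemma exc_invariant_add_cycle:
  assumes inv: "exc_invariant r V E x y" and adj: "{x, y} \<in> E"
    and new: "distinct [a, b, c, d]" "{a, b, c, d} \<inter> V = {}"
    and V': "V' = V \<union> {a, b, c, d}" and E': "E' = E \<union> {{a, b}, {b, c}, {c, d}, {d, a}, {a, x}, {c, y}}"
  shows "exc_invariant r V' E' b d"
proof -
  have graph: "simple_graph V E" and dist: "distinct [r, x, y]" and V2: "V2 V E = {r, x, y}"
    and min_deg: "\<forall>u\<in>V. 2 \<le> deg E u"
    and res_xy: "residues 3 (path_lengths V E x y) = {0, 1}"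
    and root: "root_residues r V E x y"
    using inv adj unfolding exc_invariant_def exc_twin_case_def exc_adjacent_case_def by auto
  have in_V: "r \<in> V" "x \<in> V" "y \<in> V" using V2 unfolding V2_def by auto
  interpret cycle_extension V E x y a b c d V' E'
    using graph in_V dist new V' E' by unfold_locales auto
  have V2': "V2 V' E' = {r, b, d}" and min_deg': "\<forall>u\<in>V'. 2 \<le> deg E' u"
    using V2_new_pair[OF V2 min_deg] dist by auto
  have res_bd: "residues 3 (path_lengths V' E' b d) = {1, 2}"
    unfolding path_lengths_new_pair residues_insert_shift res_xy by auto
  have full: "{0, 1, 2} \<subseteq> residues 3 (path_lengths V E r x)"
    using root_residues_full[OF graph adj root] .
  have "{0, 1, 2} \<subseteq> residues 3 (path_lengths (V' - {d}) (del_vertex_edges d E') r b)"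
    "{0, 1, 2} \<subseteq> residues 3 (path_lengths (V' - {b}) (del_vertex_edges b E') r d)"
    using residues_shift_mono[OF full path_lengths_to_new_pair(1)]
      residues_shift_mono[OF full path_lengths_to_new_pair(2)] by (auto simp: numeral_2_eq_2)
  then have "exc_twin_case r V' E' b d"
    using gadget_edges(6) deg_extension(8,9) res_bd by (intro exc_twin_caseI) auto
  moreover have "distinct [r, b, d]" using fresh in_V new by auto
  ultimately show ?thesis unfolding exc_invariant_def using simple_graph_extension V2' min_deg' by auto
qed

lemma exc_stepE:
  assumes "exc_step r x y V E V' E'"
  obtains (path) p q where "{x, y} \<notin> E" "p \<notin> V" "q \<notin> V" "p \<noteq> q" "V' = V \<union> {p, q}"
      "E' = E \<union> {{x, p}, {p, q}, {q, y}}"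
    | (twin_x) v where "{x, y} \<in> E" "v \<notin> V" "V' = insert v V"
      "E' = E \<union> {{v, u} | u. u \<in> nbrs E x}"
    | (twin_y) v where "{x, y} \<in> E" "v \<notin> V" "V' = insert v V"
      "E' = E \<union> {{v, u} | u. u \<in> nbrs E y}"
    | (cycle) a b c d where "{x, y} \<in> E" "distinct [a, b, c, d]" "{a, b, c, d} \<inter> V = {}"
      "V' = V \<union> {a, b, c, d}" "E' = E \<union> {{a, b}, {b, c}, {c, d}, {d, a}, {a, x}, {c, y}}"
  using assms unfolding exc_step_def by (elim conjE disjE exE) auto

lemma exc_reach_invariant:
  assumes "exc_reach r V E" "r \<in> V2 V E"
  shows "\<exists>x y. exc_invariant r V E x y"
  using assms
proof (induction rule: exc_reach.induct)
  case (base V E a1 a2 b1 b2 b3)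
  then show ?case by (rule exc_invariant_K23_root)
next
  case (step V E x y V' E')
  have xy: "distinct [r, x, y] \<and> r \<in> V2 V E \<and> x \<in> V2 V E \<and> y \<in> V2 V E"
    using step.hyps(2) unfolding exc_step_def by (elim conjE) (intro conjI)
  obtain x0 y0 where inv0: "exc_invariant r V E x0 y0" using step.IH xy by blast
  with xy have "V2 V E - {r} = {x, y}" by (auto dest: exc_invariant_V2)
  with inv0 have inv: "exc_invariant r V E x y" by (rule exc_invariant_other_pair)
  from step.hyps(2) show ?case
  proof (cases rule: exc_stepE)
    case (path p q)
    from exc_invariant_add_path[OF inv path] show ?thesis by blast
  next
    case (twin_x v)
    from exc_invariant_add_twin[OF inv twin_x step.prems] show ?thesis by blast
  next
    case (twin_y v)
    then have "{y, x} \<in> E" by (simp add: insert_commute)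
    from exc_invariant_add_twin[OF exc_invariant_swap[OF inv] this twin_y(2-4) step.prems]
    show ?thesis by blast
  next
    case (cycle a b c d)
    from exc_invariant_add_cycle[OF inv cycle] show ?thesis by blast
  qed
qed

theorem lemma3p2:
  fixes V :: "'a set" and E :: "'a set set" and r x y :: 'a
  assumes "exceptional V E r"
    and "V2 V E - {r} = {x, y}"
  shows "(({x, y} \<notin> E \<and> nbrs E x = nbrs E y \<and>
            equiv_mod 3 (path_lengths V E x y) {1, 2})
         \<or> ({x, y} \<in> E \<and> equiv_mod 3 (path_lengths V E x y) {0, 1}))
       \<and> (\<not> is_K23 V E \<longrightarrow>
            subset_mod 3 {0, 2} (path_lengths (V - {y}) (del_vertex_edges y E) r x) \<and>
            subset_mod 3 {0, 2} (path_lengths (V - {x}) (del_vertex_edges x E) r y))"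
proof -
  have "exc_reach r V E" "r \<in> V2 V E" using assms(1) unfolding exceptional_def by auto
  from exc_reach_invariant[OF this] obtain x0 y0 where "exc_invariant r V E x0 y0" by blast
  then have "exc_invariant r V E x y" using assms(2) by (rule exc_invariant_other_pair)
  then have "exc_twin_case r V E x y \<or> exc_adjacent_case r V E x y"
    unfolding exc_invariant_def by (elim conjE)
  then show ?thesis
    unfolding exc_twin_case_def exc_adjacent_case_def root_residues_def
      equiv_mod_iff_residues subset_mod_iff_residues
    by auto
qed

end
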